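(* For each integral geometric Apollonian super-packing there is a Euclidean motion of the plane that maps it to a strongly integral geometric Apollonian super-packing.
   Context: Circles are taken in $\hat{\mathbb C}=\mathbb R^2\cup\{\infty\}$; lines count as circles. A Descartes configuration is a set of four mutually tangent circles with disjoint interiors; an ordered, oriented one carries an ordering and a total orientation, with signed curvatures (reciprocal radius, negative when the interior is unbounded, $0$ for lines, all reversed for negative orientation). Its curvature-center coordinate matrix $M_{\mathcal D}$ is the $4\times3$ matrix with $i$-th row $(b_i,b_ix_i,b_iy_i)$, $b_i$ the signed curvature and $(x_i,y_i)$ the center of the $i$-th circle (for a line: $(0,n_x,n_y)$, $n$ the unit normal pointing into the line's interior half-plane). Let $S_i$ be the $4\times4$ matrix equal to the identity except that row $i$ has $-1$ in position $i$ and $2$ elsewhere, $S_i^\perp=S_i^T$, and $\mathcal A^S=\langle S_i,S_i^\perp\rangle$ the super-Apollonian group, acting on ordered oriented Descartes configurations by left multiplication on their augmented curvature-center coordinates. The geometric super-packing generated by $\mathcal D$ is the set of all circles of configurations in the orbit $\mathcal A^S[\mathcal D]$. It is integral if some (equivalently every) configuration in the orbit has all curvatures integers, and strongly integral if some (equivalently every) configuration in the orbit has $M_{\mathcal D}$ an integer matrix. *)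

theory Defs
  imports "HOL-Analysis.Analysis"
begin

text \<open>An oriented circle is a circle (or line) of the extended plane together with a choice
  of interior side.  OHalf n d: the line n.p = d (n a unit vector), interior the
  open half-plane n.p > d, so n is the unit normal pointing into the interior (curvature 0).
  The point at infinity is left implicit: it lies on exactly the lines.\<close>

datatype ocircle = ODisk "real^2" real | OCoDisk "real^2" real | OHalf "real^2" real

fun ocircle_wf :: "ocircle \<Rightarrow> bool" where
  "ocircle_wf (ODisk c r) = (r > 0)"
| "ocircle_wf (OCoDisk c r) = (r > 0)"
| "ocircle_wf (OHalf n d) = (norm n = 1)"

fun circ_set :: "ocircle \<Rightarrow> (real^2) set" where
  "circ_set (ODisk c r) = sphere c r"
| "circ_set (OCoDisk c r) = sphere c r"
| "circ_set (OHalf n d) = {p. n \<bullet> p = d}"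

fun is_line :: "ocircle \<Rightarrow> bool" where
  "is_line (OHalf n d) = True"
| "is_line _ = False"

fun ointerior :: "ocircle \<Rightarrow> (real^2) set" where
  "ointerior (ODisk c r) = ball c r"
| "ointerior (OCoDisk c r) = - cball c r"
| "ointerior (OHalf n d) = {p. n \<bullet> p > d}"

fun oflip :: "ocircle \<Rightarrow> ocircle" where
  "oflip (ODisk c r) = OCoDisk c r"
| "oflip (OCoDisk c r) = ODisk c r"
| "oflip (OHalf n d) = OHalf (- n) (- d)"

text \<open>Tangency in the extended plane: the two circles meet in exactly one point of
  the extended plane (two lines always meet at infinity, so two lines are tangent iff they
  are parallel and distinct).\<close>
definition tangent :: "ocircle \<Rightarrow> ocircle \<Rightarrow> bool" where
  "tangent C1 C2 \<longleftrightarrow>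
     (if is_line C1 \<and> is_line C2 then circ_set C1 \<inter> circ_set C2 = {}
      else (\<exists>!p. p \<in> circ_set C1 \<inter> circ_set C2))"

fun curv :: "ocircle \<Rightarrow> real" where
  "curv (ODisk c r) = 1 / r"
| "curv (OCoDisk c r) = - 1 / r"
| "curv (OHalf n d) = 0"

text \<open>Signed curvature of the oriented circle obtained by inversion in the unit circle.\<close>
fun curv_bar :: "ocircle \<Rightarrow> real" where
  "curv_bar (ODisk c r) = ((norm c)^2 - r^2) / r"
| "curv_bar (OCoDisk c r) = (r^2 - (norm c)^2) / r"
| "curv_bar (OHalf n d) = 2 * d"

fun cc_row :: "ocircle \<Rightarrow> real^3" where
  "cc_row (ODisk c r) = vector [1 / r, c$1 / r, c$2 / r]"
| "cc_row (OCoDisk c r) = vector [- 1 / r, - c$1 / r, - c$2 / r]"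
| "cc_row (OHalf n d) = vector [0, n$1, n$2]"

definition aug_row :: "ocircle \<Rightarrow> real^4" where
  "aug_row C = vector [curv_bar C, cc_row C $ 1, cc_row C $ 2, cc_row C $ 3]"

text \<open>Four mutually tangent oriented circles, with total orientation: either all interiors
  are pairwise disjoint (positive orientation), or the configuration is the total reversal
  of one with pairwise disjoint interiors (negative orientation).\<close>
definition oriented_descartes :: "ocircle^4 \<Rightarrow> bool" where
  "oriented_descartes D \<longleftrightarrow>
     (\<forall>i. ocircle_wf (D$i)) \<and>
     (\<forall>i j. i \<noteq> j \<longrightarrow> tangent (D$i) (D$j)) \<and>
     ((\<forall>i j. i \<noteq> j \<longrightarrow> ointerior (D$i) \<inter> ointerior (D$j) = {}) \<or>
      (\<forall>i j. i \<noteq> j \<longrightarrow> ointerior (oflip (D$i)) \<inter> ointerior (oflip (D$j)) = {}))"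

definition M_coord :: "ocircle^4 \<Rightarrow> real^3^4" where
  "M_coord D = (\<chi> i. cc_row (D$i))"

definition W_coord :: "ocircle^4 \<Rightarrow> real^4^4" where
  "W_coord D = (\<chi> i. aug_row (D$i))"

definition S_gen :: "4 \<Rightarrow> real^4^4" where
  "S_gen i = (\<chi> j k. if j = i then (if k = i then -1 else 2) else (if k = j then 1 else 0))"

inductive_set superApollonian :: "(real^4^4) set" where
  id: "mat 1 \<in> superApollonian"
| S: "g \<in> superApollonian \<Longrightarrow> S_gen i ** g \<in> superApollonian"
| S_perp: "g \<in> superApollonian \<Longrightarrow> transpose (S_gen i) ** g \<in> superApollonian"
| S_inv: "g \<in> superApollonian \<Longrightarrow> matrix_inv (S_gen i) ** g \<in> superApollonian"
| S_perp_inv: "g \<in> superApollonian \<Longrightarrow> matrix_inv (transpose (S_gen i)) ** g \<in> superApollonian"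

definition sA_orbit :: "ocircle^4 \<Rightarrow> (ocircle^4) set" where
  "sA_orbit D = {D'. oriented_descartes D' \<and> (\<exists>g\<in>superApollonian. W_coord D' = g ** W_coord D)}"

definition super_packing :: "ocircle^4 \<Rightarrow> (real^2) set set" where
  "super_packing D = {circ_set (D'$i) | D' i. D' \<in> sA_orbit D}"

definition integral_super_packing :: "ocircle^4 \<Rightarrow> bool" where
  "integral_super_packing D \<longleftrightarrow> (\<exists>D'\<in>sA_orbit D. \<forall>i. curv (D'$i) \<in> \<int>)"

definition strongly_integral_super_packing :: "ocircle^4 \<Rightarrow> bool" where
  "strongly_integral_super_packing D \<longleftrightarrow> (\<exists>D'\<in>sA_orbit D. \<forall>i j. M_coord D' $ i $ j \<in> \<int>)"

definition euclidean_motion :: "(real^2 \<Rightarrow> real^2) \<Rightarrow> bool" where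
  "euclidean_motion f \<longleftrightarrow> (\<forall>x y. dist (f x) (f y) = dist x y)"

end

theory Submission
  imports Defs
begin

text \<open>
  The augmented curvature-centre coordinates W of an oriented Descartes configuration satisfy
  the Gram relation W Q_W^-1 W^T = Q_D: any two of its circles have inversive product -1.
  Hence the curvature column obeys the Descartes relation, and the reflections S_i and S_i^T
  lower the absolute curvature sum of such an integral matrix until every curvature is 0 or
  a common value m, i.e. two parallel lines with circles of curvature m between them.  This
  writes W = h V with h an integral matrix; V is merely a matrix satisfying the Gram relation,
  and h need not lie in the super-Apollonian group.  For reduced V the Gram relation makes all
  curvature-centre coordinates integral once the lines are rotated to be horizontal and one
  circle is translated to the origin.  A Euclidean motion acts on augmented coordinates by
  right multiplication with a matrix M, so it commutes with the super-Apollonian group, maps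
  the super-packing of D onto that of the moved configuration, and moves W to h (V M^T).
\<close>

lemma vector_4 [simp]:
  "(vector [x, y, z, w] :: 'a::zero^4) $ 1 = x"
  "(vector [x, y, z, w] :: 'a::zero^4) $ 2 = y"
  "(vector [x, y, z, w] :: 'a::zero^4) $ 3 = z"
  "(vector [x, y, z, w] :: 'a::zero^4) $ 4 = w"
  unfolding vector_def by simp_all

lemma inner_vec2: "inner (x :: real^2) y = x$1 * y$1 + x$2 * y$2"
  by (simp add: inner_vec_def sum_2)

lemma norm_power2_vec2: "(norm (x :: real^2))^2 = (x$1)^2 + (x$2)^2"
  by (simp only: power2_norm_eq_inner) (simp add: inner_vec2 power2_eq_square)

lemma dist_power2_vec2: "(dist (x :: real^2) y)^2 = (x$1 - y$1)^2 + (x$2 - y$2)^2"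
  by (simp add: dist_norm norm_power2_vec2)

lemma aug_row_nth [simp]:
  "aug_row C $ 1 = curv_bar C" "aug_row C $ 2 = cc_row C $ 1"
  "aug_row C $ 3 = cc_row C $ 2" "aug_row C $ 4 = cc_row C $ 3"
  by (simp_all add: aug_row_def)

lemma W_coord_curv: "W_coord E $ i $ 2 = curv (E$i)"
  by (cases "E$i") (simp_all add: W_coord_def)

section \<open>Inversive products of oriented circles\<close>

definition inversive_prod :: "real^4 \<Rightarrow> real^4 \<Rightarrow> real" where
  "inversive_prod x y = x$3 * y$3 + x$4 * y$4 - (x$1 * y$2 + x$2 * y$1) / 2"

lemma inversive_prod_commute: "inversive_prod x y = inversive_prod y x"
  by (simp add: inversive_prod_def algebra_simps)

lemma inversive_prod_minus: "inversive_prod (- x) (- y) = inversive_prod x y"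
  by (simp add: inversive_prod_def)

lemma aug_row_oflip: "aug_row (oflip C) = - aug_row C"
  by (cases C) (simp_all add: vec_eq_iff forall_4 diff_divide_distrib)

lemma inversive_prod_self:
  assumes "ocircle_wf C"
  shows "inversive_prod (aug_row C) (aug_row C) = 1"
proof (cases C)
  case (OHalf n d)
  then have "n$1 * n$1 + n$2 * n$2 = 1"
    using assms norm_power2_vec2[of n] by (simp add: power2_eq_square)
  then show ?thesis using OHalf by (simp add: inversive_prod_def)
qed (use assms in \<open>simp_all add: inversive_prod_def norm_power2_vec2,
       simp_all add: field_simps power2_eq_square\<close>)

lemma inversive_prod_disk_disk:
  assumes "r1 > 0" "r2 > 0"
  shows "inversive_prod (aug_row (ODisk c1 r1)) (aug_row (ODisk c2 r2))
           = (r1^2 + r2^2 - (dist c1 c2)^2) / (2 * r1 * r2)"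
  using assms by (simp add: inversive_prod_def norm_power2_vec2 dist_power2_vec2)
                 (simp add: field_simps power2_eq_square)

lemma inversive_prod_disk_codisk:
  assumes "r1 > 0" "r2 > 0"
  shows "inversive_prod (aug_row (ODisk c1 r1)) (aug_row (OCoDisk c2 r2))
           = ((dist c1 c2)^2 - r1^2 - r2^2) / (2 * r1 * r2)"
  using assms by (simp add: inversive_prod_def norm_power2_vec2 dist_power2_vec2)
                 (simp add: field_simps power2_eq_square)

lemma inversive_prod_disk_half:
  assumes "r > 0"
  shows "inversive_prod (aug_row (ODisk c r)) (aug_row (OHalf n d)) = (inner n c - d) / r"
  using assms by (simp add: inversive_prod_def inner_vec2) (simp add: field_simps)

lemma inversive_prod_half_half:
  "inversive_prod (aug_row (OHalf n1 d1)) (aug_row (OHalf n2 d2)) = inner n1 n2"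
  by (simp add: inversive_prod_def inner_vec2)

lemma dist_eq_radius_sum_if_disjoint_balls:
  fixes c1 c2 p :: "'a::real_normed_vector"
  assumes r1: "r1 > 0" and r2: "r2 > 0" and disj: "ball c1 r1 \<inter> ball c2 r2 = {}"
    and p1: "dist c1 p = r1" and p2: "dist c2 p = r2"
  shows "dist c1 c2 = r1 + r2"
proof (rule antisym)
  show "dist c1 c2 \<le> r1 + r2"
    using dist_triangle[of c1 c2 p] p1 p2 by (simp add: dist_commute)
  show "r1 + r2 \<le> dist c1 c2"
  proof (rule ccontr)
    assume "\<not> r1 + r2 \<le> dist c1 c2"
    then have lt: "dist c1 c2 < r1 + r2" by simp
    define q where "q = c1 + (r1 / (r1 + r2)) *\<^sub>R (c2 - c1)"
    have "c2 - q = (1 - r1 / (r1 + r2)) *\<^sub>R (c2 - c1)"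
      by (simp add: q_def algebra_simps)
    also have "1 - r1 / (r1 + r2) = r2 / (r1 + r2)"
      using r1 r2 by (simp add: field_simps)
    finally have "dist c2 q = r2 / (r1 + r2) * dist c1 c2"
      using r1 r2 by (simp add: dist_norm norm_minus_commute)
    also have "\<dots> < r2"
      using mult_strict_left_mono[OF lt, of "r2 / (r1 + r2)"] r1 r2 by simp
    finally have "q \<in> ball c2 r2" by simp
    moreover have "dist c1 q = r1 / (r1 + r2) * dist c1 c2"
      using r1 r2 by (simp add: q_def dist_norm norm_minus_commute)
    then have "q \<in> ball c1 r1"
      using mult_strict_left_mono[OF lt, of "r1 / (r1 + r2)"] r1 r2 by simp
    ultimately show False using disj by blast
  qed
qed

lemma dist_eq_radius_diff_if_ball_inside:
  fixes c1 c2 p :: "'a::euclidean_space"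
  assumes r1: "r1 > 0" and disj: "ball c1 r1 \<inter> - cball c2 r2 = {}"
    and p1: "dist c1 p = r1" and p2: "dist c2 p = r2"
  shows "dist c1 c2 = r2 - r1"
proof -
  have "ball c1 r1 \<subseteq> cball c2 r2" using disj by blast
  then have "dist c1 c2 + r1 \<le> r2" using r1 by (simp add: ball_subset_cball_iff)
  moreover have "r2 \<le> dist c2 c1 + dist c1 p" using dist_triangle[of c2 p c1] p2 by simp
  ultimately show ?thesis using p1 by (simp add: dist_commute)
qed

lemma compl_cballs_intersect:
  fixes c1 c2 :: "'a::euclidean_space"
  shows "- cball c1 r1 \<inter> - cball c2 r2 \<noteq> {}"
proof
  assume "- cball c1 r1 \<inter> - cball c2 r2 = {}"
  then have "cball c1 r1 \<union> cball c2 r2 = UNIV" by blast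
  then show False using not_bounded_UNIV bounded_Un bounded_cball by metis
qed

lemma inner_centre_if_ball_halfspace_disjoint:
  fixes c n p :: "'a::real_inner"
  assumes r: "r > 0" and n: "norm n = 1" and disj: "ball c r \<inter> {p. inner n p > d} = {}"
    and p1: "dist c p = r" and p2: "inner n p = d"
  shows "inner n c + r = d"
proof (rule antisym)
  have "inner n (p - c) \<le> norm n * norm (p - c)" by (rule norm_cauchy_schwarz)
  then show "d \<le> inner n c + r"
    using n p1 p2 by (simp add: inner_diff_right dist_norm norm_minus_commute)
  show "inner n c + r \<le> d"
  proof (rule ccontr)
    assume lt: "\<not> inner n c + r \<le> d"
    define s where "s = (max (d - inner n c) 0 + r) / 2"
    have s: "0 \<le> s" "s < r" "d - inner n c < s" using r lt by (auto simp: s_def max_def)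
    have "inner n n = 1" using n by (simp add: norm_eq_sqrt_inner)
    then have "inner n (c + s *\<^sub>R n) > d" using s by (simp add: inner_add_right)
    moreover have "c + s *\<^sub>R n \<in> ball c r" using s n by (simp add: dist_norm)
    ultimately show False using disj by blast
  qed
qed

lemma compl_cball_halfspace_intersect:
  fixes c n :: "'a::real_inner"
  assumes n: "norm n = 1"
  shows "- cball c r \<inter> {p. inner n p > d} \<noteq> {}"
proof -
  define q where "q = (\<bar>d\<bar> + norm c + \<bar>r\<bar> + 1) *\<^sub>R n"
  have "inner n n = 1" using n by (simp add: norm_eq_sqrt_inner)
  then have "inner n q > d" by (simp add: q_def) (smt (verit) norm_ge_zero)
  moreover have "norm q \<le> norm c + dist c q"
    by (metis dist_norm norm_triangle_sub norm_minus_commute)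
  then have "q \<in> - cball c r" using n by (simp add: q_def)
  ultimately show ?thesis by blast
qed

lemma inner_eq_minus_one_if_halfspaces_disjoint:
  fixes n1 n2 :: "'a::real_inner"
  assumes n1: "norm n1 = 1" and n2: "norm n2 = 1"
    and disj: "{p. inner n1 p > d1} \<inter> {p. inner n2 p > d2} = {}"
  shows "inner n1 n2 = -1"
proof (rule ccontr)
  assume ne: "inner n1 n2 \<noteq> -1"
  have "\<bar>inner n1 n2\<bar> \<le> 1" using Cauchy_Schwarz_ineq2[of n1 n2] n1 n2 by simp
  then have k: "inner n1 n2 + 1 > 0" using ne by linarith
  define q where "q = ((\<bar>d1\<bar> + \<bar>d2\<bar> + 1) / (inner n1 n2 + 1)) *\<^sub>R (n1 + n2)"
  have "inner n1 n1 = 1" "inner n2 n2 = 1" using n1 n2 by (simp_all add: norm_eq_sqrt_inner)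
  then have "inner n1 q = \<bar>d1\<bar> + \<bar>d2\<bar> + 1" "inner n2 q = \<bar>d1\<bar> + \<bar>d2\<bar> + 1"
    using k by (simp_all add: q_def inner_add_right inner_commute add.commute)
  then have "q \<in> {p. inner n1 p > d1} \<inter> {p. inner n2 p > d2}" by auto
  then show False using disj by blast
qed

lemma tangent_commute: "tangent C1 C2 \<longleftrightarrow> tangent C2 C1"
  unfolding tangent_def by (simp add: Int_commute conj_commute)

lemma tangent_common_point:
  assumes "tangent C1 C2" "\<not> (is_line C1 \<and> is_line C2)"
  obtains p where "p \<in> circ_set C1" "p \<in> circ_set C2"
  using assms unfolding tangent_def by auto

lemma inversive_prod_disk_tangent_disjoint:
  assumes r: "r > 0" and wf: "ocircle_wf C" and t: "tangent (ODisk c r) C"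
    and disj: "ball c r \<inter> ointerior C = {}"
  shows "inversive_prod (aug_row (ODisk c r)) (aug_row C) = -1"
proof -
  obtain p where p: "dist c p = r" "p \<in> circ_set C"
    using tangent_common_point[OF t] by auto
  show ?thesis
  proof (cases C)
    case (ODisk c' r')
    then have "dist c c' = r + r'"
      using dist_eq_radius_sum_if_disjoint_balls[of r r' c c' p] r wf disj p by auto
    then show ?thesis
      using ODisk r wf by (simp add: inversive_prod_disk_disk field_simps power2_eq_square)
  next
    case (OCoDisk c' r')
    then have "dist c c' = r' - r"
      using dist_eq_radius_diff_if_ball_inside[of r c c' r' p] r disj p by auto
    then show ?thesis
      using OCoDisk r wf
      by (simp add: inversive_prod_disk_codisk) (simp add: field_simps power2_eq_square)
  next
    case (OHalf n d)
    then have "inner n c + r = d"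
      using inner_centre_if_ball_halfspace_disjoint[of r n c d p] r wf disj p by auto
    then show ?thesis
      using OHalf r by (auto simp: inversive_prod_disk_half)
  qed
qed

lemma inversive_prod_tangent_disjoint:
  assumes wf1: "ocircle_wf C1" and wf2: "ocircle_wf C2" and t: "tangent C1 C2"
    and disj: "ointerior C1 \<inter> ointerior C2 = {}"
  shows "inversive_prod (aug_row C1) (aug_row C2) = -1"
proof -
  have t': "tangent C2 C1" and disj': "ointerior C2 \<inter> ointerior C1 = {}"
    using t disj by (simp_all add: tangent_commute Int_commute)
  show ?thesis
  proof (cases C1)
    case (ODisk c r)
    then show ?thesis using inversive_prod_disk_tangent_disjoint wf1 wf2 t disj by auto
  next
    case (OCoDisk c r)
    note C1 = this
    show ?thesis
    proof (cases C2)
      case (ODisk c' r')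
      then show ?thesis
        using inversive_prod_disk_tangent_disjoint wf1 wf2 t' disj' inversive_prod_commute by auto
    next
      case (OCoDisk c' r')
      then show ?thesis using C1 disj compl_cballs_intersect[of c r c' r'] by simp
    next
      case (OHalf n d)
      then show ?thesis using C1 disj wf2 compl_cball_halfspace_intersect[of n c r d] by simp
    qed
  next
    case (OHalf n d)
    note C1 = this
    show ?thesis
    proof (cases C2)
      case (ODisk c' r')
      then show ?thesis
        using inversive_prod_disk_tangent_disjoint wf1 wf2 t' disj' inversive_prod_commute by auto
    next
      case (OCoDisk c' r')
      then show ?thesis using C1 disj' wf1 compl_cball_halfspace_intersect[of n c' r' d] by simp
    next
      case (OHalf n' d')
      then show ?thesis
        using C1 wf1 wf2 disj inner_eq_minus_one_if_halfspaces_disjoint[of n n' d d']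
        by (simp add: inversive_prod_half_half)
    qed
  qed
qed

lemma ocircle_wf_oflip: "ocircle_wf (oflip C) = ocircle_wf C"
  by (cases C) auto

lemma tangent_oflip: "tangent (oflip C1) (oflip C2) = tangent C1 C2"
proof -
  have "circ_set (oflip C) = circ_set C" "is_line (oflip C) = is_line C" for C
    by (cases C; simp)+
  then show ?thesis by (simp add: tangent_def)
qed

lemma oriented_descartes_inversive_prod:
  assumes "oriented_descartes D"
  shows "inversive_prod (aug_row (D$i)) (aug_row (D$j)) = (if i = j then 1 else -1)"
proof (cases "i = j")
  case True
  then show ?thesis using assms inversive_prod_self by (simp add: oriented_descartes_def)
next
  case False
  have wf: "ocircle_wf (D$i)" "ocircle_wf (D$j)" and t: "tangent (D$i) (D$j)"
    using assms False by (auto simp: oriented_descartes_def)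
  from assms False consider
      "ointerior (D$i) \<inter> ointerior (D$j) = {}"
    | "ointerior (oflip (D$i)) \<inter> ointerior (oflip (D$j)) = {}"
    unfolding oriented_descartes_def by blast
  then show ?thesis
  proof cases
    case 1
    then show ?thesis using inversive_prod_tangent_disjoint[OF wf t] False by simp
  next
    case 2
    then have "inversive_prod (aug_row (oflip (D$i))) (aug_row (oflip (D$j))) = -1"
      using inversive_prod_tangent_disjoint wf t by (simp add: ocircle_wf_oflip tangent_oflip)
    then show ?thesis using False by (simp add: aug_row_oflip inversive_prod_minus)
  qed
qed

section \<open>The Gram relation\<close>

definition descartes_gram :: "real^4^4 \<Rightarrow> bool" where
  "descartes_gram W \<longleftrightarrow> (\<forall>i j. inversive_prod (W$i) (W$j) = (if i = j then 1 else -1))"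

lemma oriented_descartes_gram: "oriented_descartes D \<Longrightarrow> descartes_gram (W_coord D)"
  by (simp add: descartes_gram_def W_coord_def oriented_descartes_inversive_prod)

text \<open>The matrices of the augmented Euclidean Descartes theorem W^T Q_D W = Q_W of Graham,
  Lagarias, Mallows, Wilks and Yan; descartes_gram is its dual form W Q_W^-1 W^T = Q_D.\<close>

definition Q_D :: "real^4^4" where
  "Q_D = (\<chi> i j. if i = j then 1/2 else -1/2)"

definition Q_W :: "real^4^4" where
  "Q_W = (\<chi> i j. if (i = 1 \<and> j = 2) \<or> (i = 2 \<and> j = 1) then -4
                 else if i = j \<and> (i = 3 \<or> i = 4) then 2 else 0)"

definition Q_W_inv :: "real^4^4" where
  "Q_W_inv = (\<chi> i j. if (i = 1 \<and> j = 2) \<or> (i = 2 \<and> j = 1) then -1/4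
                     else if i = j \<and> (i = 3 \<or> i = 4) then 1/2 else 0)"

lemma Q_W_Q_W_inv: "Q_W ** Q_W_inv = mat 1"
  by (simp add: vec_eq_iff forall_4 matrix_matrix_mult_def sum_4 Q_W_def Q_W_inv_def mat_def)

lemma Q_D_involution: "Q_D ** Q_D = mat 1"
  by (simp add: vec_eq_iff forall_4 matrix_matrix_mult_def sum_4 Q_D_def mat_def)

lemma descartes_gram_iff_matrix: "descartes_gram W \<longleftrightarrow> W ** Q_W_inv ** transpose W = Q_D"
proof -
  have "inversive_prod (W$i) (W$j) = 2 * (W ** Q_W_inv ** transpose W) $ i $ j" for i j
    by (simp add: matrix_matrix_mult_def transpose_def sum_4 Q_W_inv_def inversive_prod_def
        field_simps)
  moreover have "(if i = j then 1 else -1) = 2 * Q_D $ i $ j" for i j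
    by (simp add: Q_D_def)
  ultimately show ?thesis
    unfolding descartes_gram_def by (simp add: vec_eq_iff)
qed

lemma augmented_descartes_theorem:
  assumes "descartes_gram W"
  shows "transpose W ** Q_D ** W = Q_W"
proof -
  have "W ** (Q_W_inv ** transpose W ** Q_D) = mat 1"
    using assms Q_D_involution by (simp add: descartes_gram_iff_matrix matrix_mul_assoc)
  then have "(Q_W_inv ** transpose W ** Q_D) ** W = mat 1"
    using matrix_left_right_inverse by blast
  then have "Q_W ** ((Q_W_inv ** transpose W ** Q_D) ** W) = Q_W"
    by (simp add: matrix_mul_rid)
  then show ?thesis
    using Q_W_Q_W_inv by (simp add: matrix_mul_assoc matrix_mul_lid)
qed

definition curv_sum :: "real^4^4 \<Rightarrow> real" where
  "curv_sum W = (\<Sum>i\<in>UNIV. W$i$2)"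

lemma descartes_curvature_relation:
  assumes "descartes_gram W"
  shows "2 * (\<Sum>i\<in>UNIV. (W$i$2)^2) = (curv_sum W)^2"
proof -
  have "(transpose W ** Q_D ** W) $ 2 $ 2 = 0"
    using augmented_descartes_theorem[OF assms] by (simp add: Q_W_def)
  then show ?thesis
    by (simp add: matrix_matrix_mult_def transpose_def sum_4 Q_D_def curv_sum_def
        power2_eq_square field_simps)
qed

lemma curv_sum_nonzero:
  assumes "descartes_gram W"
  shows "curv_sum W \<noteq> 0"
proof
  assume "curv_sum W = 0"
  then have "(\<Sum>i\<in>UNIV. (W$i$2)^2) = 0"
    using descartes_curvature_relation[OF assms] by simp
  then have col: "W$i$2 = 0" for i
    by (simp add: sum_nonneg_eq_0_iff)
  have "(transpose W ** Q_D ** W) $ 2 $ 1 = -4"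
    using augmented_descartes_theorem[OF assms] by (simp add: Q_W_def)
  then show False
    by (simp add: matrix_matrix_mult_def transpose_def col)
qed

section \<open>Reduction of integral curvatures\<close>

definition integral_mat :: "real^'n^'m \<Rightarrow> bool" where
  "integral_mat A \<longleftrightarrow> (\<forall>i j. A$i$j \<in> \<int>)"

lemma integral_mat_mult:
  "integral_mat (A :: real^'n^'m) \<Longrightarrow> integral_mat (B :: real^'p^'n) \<Longrightarrow> integral_mat (A ** B)"
  unfolding integral_mat_def matrix_matrix_mult_def by (auto intro!: Ints_sum Ints_mult)

lemma integral_mat_mult_column:
  assumes "integral_mat (g :: real^'n^'m)" "\<forall>i. W$i$k \<in> \<int>"
  shows "(g ** W)$i$k \<in> \<int>"
  using assms unfolding integral_mat_def matrix_matrix_mult_def by (auto intro!: Ints_sum Ints_mult)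

lemma integral_mat_1: "integral_mat (mat 1)"
  by (simp add: integral_mat_def mat_def)

lemma descartes_gram_mult:
  assumes "g ** Q_D ** transpose g = Q_D" and "descartes_gram W"
  shows "descartes_gram (g ** W)"
proof -
  have "(g ** W) ** Q_W_inv ** transpose (g ** W)
          = g ** (W ** Q_W_inv ** transpose W) ** transpose g"
    by (simp add: matrix_transpose_mul matrix_mul_assoc)
  then show ?thesis using assms by (simp add: descartes_gram_iff_matrix)
qed

definition descent_moves :: "(real^4^4) set" where
  "descent_moves = range S_gen \<union> range (\<lambda>i. transpose (S_gen i))"

lemma S_gen_involution: "S_gen i ** S_gen i = mat 1"
  using exhaust_4[of i]
  by (auto simp: vec_eq_iff forall_4 matrix_matrix_mult_def sum_4 S_gen_def mat_def)

lemma descent_move_involution: "g \<in> descent_moves \<Longrightarrow> g ** g = mat 1"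
  unfolding descent_moves_def
  by (metis (mono_tags, lifting) S_gen_involution UnE imageE matrix_transpose_mul transpose_mat)

lemma descent_move_integral: "g \<in> descent_moves \<Longrightarrow> integral_mat g"
  by (auto simp: descent_moves_def integral_mat_def S_gen_def transpose_def)

lemma S_gen_Q_D: "S_gen i ** Q_D ** transpose (S_gen i) = Q_D"
  using exhaust_4[of i]
  by (auto simp: vec_eq_iff forall_4 matrix_matrix_mult_def sum_4 S_gen_def Q_D_def transpose_def)

lemma transpose_S_gen_Q_D: "transpose (S_gen i) ** Q_D ** S_gen i = Q_D"
  using exhaust_4[of i]
  by (auto simp: vec_eq_iff forall_4 matrix_matrix_mult_def sum_4 S_gen_def Q_D_def transpose_def)

lemma descent_move_Q_D: "g \<in> descent_moves \<Longrightarrow> g ** Q_D ** transpose g = Q_D"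
  by (auto simp: descent_moves_def S_gen_Q_D transpose_S_gen_Q_D)

lemma curv_sum_S_gen: "curv_sum (S_gen i ** W) = 3 * curv_sum W - 4 * W$i$2"
  using exhaust_4[of i] by (auto simp: curv_sum_def matrix_matrix_mult_def sum_4 S_gen_def)

lemma curv_sum_transpose_S_gen: "curv_sum (transpose (S_gen i) ** W) = curv_sum W + 4 * W$i$2"
  using exhaust_4[of i]
  by (auto simp: curv_sum_def matrix_matrix_mult_def sum_4 S_gen_def transpose_def)

lemma reduced_descartes_quadruple:
  fixes f :: "4 \<Rightarrow> real"
  assumes s: "s > 0" and sum: "(\<Sum>i\<in>UNIV. f i) = s" and quad: "2 * (\<Sum>i\<in>UNIV. (f i)^2) = s^2"
    and gaps: "\<And>i. \<not> (s/2 < f i \<and> f i < s) \<and> \<not> (-s/2 < f i \<and> f i < 0)"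
  shows "f i = 0 \<or> f i = s/2"
proof -
  \<comment> \<open>Centring at s/4 confines every f j to [-s/4, 3s/4], and the gaps leave [0, s/2].\<close>
  have "(\<Sum>j\<in>UNIV. (f j - s/4)^2) = (\<Sum>j\<in>UNIV. (f j)^2) - s/2 * (\<Sum>j\<in>UNIV. f j) + s^2/4"
    by (simp add: sum_4 power2_eq_square field_simps)
  also have "\<dots> = (s/2)^2"
    using sum quad by (simp add: power2_eq_square)
  finally have "(f j - s/4)^2 \<le> (s/2)^2" for j
    by (metis member_le_sum[of j UNIV "\<lambda>j. (f j - s/4)^2"] finite UNIV_I zero_le_power2)
  then have dev: "\<bar>f j - s/4\<bar> \<le> s/2" for j
    using s abs_le_square_iff[of "f j - s/4" "s/2"] by simp
  have range: "0 \<le> f j \<and> f j \<le> s/2" for j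
    using s dev[of j] gaps[of j] by (auto simp: abs_le_iff)
  have "(\<Sum>j\<in>UNIV. f j * (s/2 - f j)) = s/2 * (\<Sum>j\<in>UNIV. f j) - (\<Sum>j\<in>UNIV. (f j)^2)"
    by (simp add: sum_distrib_left sum_subtractf right_diff_distrib power2_eq_square mult.commute)
  also have "\<dots> = 0"
    using sum quad by (simp add: power2_eq_square)
  finally have "f i * (s/2 - f i) = 0"
    using range by (subst (asm) sum_nonneg_eq_0_iff) auto
  then show ?thesis by auto
qed

definition reduced_curvatures :: "real^4^4 \<Rightarrow> bool" where
  "reduced_curvatures V \<longleftrightarrow>
     (\<exists>m. m \<noteq> 0 \<and> (\<forall>i. V$i$2 = 0 \<or> V$i$2 = m) \<and> (\<exists>i. V$i$2 = 0) \<and> (\<exists>j. V$j$2 = m))"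

lemma reduced_curvatures_uminus:
  assumes "reduced_curvatures (- V)"
  shows "reduced_curvatures V"
proof -
  obtain m where "m \<noteq> 0" "\<forall>i. - V$i$2 = 0 \<or> - V$i$2 = m" "\<exists>i. - V$i$2 = 0" "\<exists>j. - V$j$2 = m"
    using assms by (auto simp: reduced_curvatures_def)
  then show ?thesis
    unfolding reduced_curvatures_def by (intro exI[of _ "- m"]) auto
qed

lemma S_gen_in_descent_moves: "S_gen i \<in> descent_moves"
  and transpose_S_gen_in_descent_moves: "transpose (S_gen i) \<in> descent_moves"
  by (simp_all add: descent_moves_def)

lemma reduction_step_pos:
  assumes quad: "2 * (\<Sum>i\<in>UNIV. (W$i$2)^2) = (curv_sum W)^2" and s: "curv_sum W > 0"
  shows "reduced_curvatures W \<or> (\<exists>g\<in>descent_moves. \<bar>curv_sum (g ** W)\<bar> < curv_sum W)"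
proof -
  let ?s = "curv_sum W"
  consider i where "?s/2 < W$i$2 \<and> W$i$2 < ?s" | i where "-?s/2 < W$i$2 \<and> W$i$2 < 0"
    | "\<And>i. \<not> (?s/2 < W$i$2 \<and> W$i$2 < ?s) \<and> \<not> (-?s/2 < W$i$2 \<and> W$i$2 < 0)"
    by blast
  then show ?thesis
  proof cases
    case 1
    then have "\<bar>curv_sum (S_gen i ** W)\<bar> < ?s" by (simp add: curv_sum_S_gen abs_less_iff)
    then show ?thesis using S_gen_in_descent_moves by blast
  next
    case 2
    then have "\<bar>curv_sum (transpose (S_gen i) ** W)\<bar> < ?s"
      using s by (simp add: curv_sum_transpose_S_gen abs_less_iff)
    then show ?thesis using transpose_S_gen_in_descent_moves by blast
  next
    case 3
    have zero_or_half: "W$i$2 = 0 \<or> W$i$2 = ?s/2" for i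
      using reduced_descartes_quadruple[of ?s "\<lambda>i. W$i$2", OF s _ quad 3]
      by (simp add: curv_sum_def)
    have sum: "?s = W$1$2 + W$2$2 + W$3$2 + W$4$2"
      by (simp add: curv_sum_def sum_4)
    have "\<exists>i. W$i$2 = 0"
    proof (rule ccontr)
      assume "\<nexists>i. W$i$2 = 0"
      then have "W$1$2 = ?s/2" "W$2$2 = ?s/2" "W$3$2 = ?s/2" "W$4$2 = ?s/2"
        using zero_or_half by blast+
      then show False using sum s by linarith
    qed
    moreover have "\<exists>i. W$i$2 = ?s/2"
    proof (rule ccontr)
      assume "\<nexists>i. W$i$2 = ?s/2"
      then have "W$1$2 = 0" "W$2$2 = 0" "W$3$2 = 0" "W$4$2 = 0"
        using zero_or_half by blast+
      then show False using sum s by linarith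
    qed
    ultimately have "reduced_curvatures W"
      unfolding reduced_curvatures_def using zero_or_half s by (intro exI[of _ "?s/2"]) simp
    then show ?thesis ..
  qed
qed

lemma matrix_mul_uminus_right: "(A :: 'a::ring_1^'n^'m) ** (- B) = - (A ** B)"
  by (simp add: matrix_matrix_mult_def vec_eq_iff sum_negf)

lemma curv_sum_uminus: "curv_sum (- W) = - curv_sum W"
  by (simp add: curv_sum_def sum_negf)

lemma reduction_step:
  assumes "descartes_gram W"
  shows "reduced_curvatures W \<or> (\<exists>g\<in>descent_moves. \<bar>curv_sum (g ** W)\<bar> < \<bar>curv_sum W\<bar>)"
proof (cases "curv_sum W > 0")
  case True
  then show ?thesis using reduction_step_pos descartes_curvature_relation[OF assms] by force
next
  case False
  then have neg: "curv_sum (- W) > 0"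
    using curv_sum_nonzero[OF assms] by (simp add: curv_sum_uminus)
  have "2 * (\<Sum>i\<in>UNIV. ((- W)$i$2)^2) = (curv_sum (- W))^2"
    using descartes_curvature_relation[OF assms] by (simp add: curv_sum_uminus)
  then consider "reduced_curvatures (- W)"
    | g where "g \<in> descent_moves" "\<bar>curv_sum (g ** - W)\<bar> < curv_sum (- W)"
    using reduction_step_pos[OF _ neg] by blast
  then show ?thesis
  proof cases
    case 1
    then show ?thesis using reduced_curvatures_uminus by simp
  next
    case 2
    then have "\<bar>curv_sum (g ** W)\<bar> < - curv_sum W"
      by (simp add: matrix_mul_uminus_right curv_sum_uminus)
    also have "- curv_sum W = \<bar>curv_sum W\<bar>"
      using neg by (simp add: curv_sum_uminus)
    finally have "\<bar>curv_sum (g ** W)\<bar> < \<bar>curv_sum W\<bar>" .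
    then show ?thesis using \<open>g \<in> descent_moves\<close> by blast
  qed
qed

lemma nat_floor_abs_less:
  "x \<in> \<int> \<Longrightarrow> y \<in> \<int> \<Longrightarrow> \<bar>x\<bar> < \<bar>y\<bar> \<Longrightarrow> nat \<lfloor>\<bar>x :: real\<bar>\<rfloor> < nat \<lfloor>\<bar>y\<bar>\<rfloor>"
  by (auto elim!: Ints_cases simp flip: of_int_abs)

lemma descent_to_reduced:
  assumes "descartes_gram W" and "\<forall>i. W$i$2 \<in> \<int>"
  shows "\<exists>h V. integral_mat h \<and> W = h ** V \<and>
           descartes_gram V \<and> reduced_curvatures V \<and> (\<forall>i. V$i$2 \<in> \<int>)"
  using assms
proof (induction "nat \<lfloor>\<bar>curv_sum W\<bar>\<rfloor>" arbitrary: W rule: less_induct)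
  case less
  from reduction_step[OF less.prems(1)] show ?case
  proof
    assume "reduced_curvatures W"
    then show ?case
      using less.prems integral_mat_1 matrix_mul_lid[of W] by metis
  next
    assume "\<exists>g\<in>descent_moves. \<bar>curv_sum (g ** W)\<bar> < \<bar>curv_sum W\<bar>"
    then obtain g where g: "g \<in> descent_moves" and lt: "\<bar>curv_sum (g ** W)\<bar> < \<bar>curv_sum W\<bar>"
      by blast
    have gram: "descartes_gram (g ** W)"
      using descartes_gram_mult[OF descent_move_Q_D[OF g] less.prems(1)] .
    have ints: "\<forall>i. (g ** W)$i$2 \<in> \<int>"
      using integral_mat_mult_column[OF descent_move_integral[OF g] less.prems(2)] by blast
    have "nat \<lfloor>\<bar>curv_sum (g ** W)\<bar>\<rfloor> < nat \<lfloor>\<bar>curv_sum W\<bar>\<rfloor>"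
      using nat_floor_abs_less[OF _ _ lt] ints less.prems(2) by (simp add: curv_sum_def Ints_sum)
    then obtain h V where h: "integral_mat h" "g ** W = h ** V"
      and V: "descartes_gram V" "reduced_curvatures V" "\<forall>i. V$i$2 \<in> \<int>"
      using less.hyps gram ints by blast
    have "W = g ** (g ** W)"
      using descent_move_involution[OF g] by (simp add: matrix_mul_assoc matrix_mul_lid)
    then have "W = (g ** h) ** V"
      using h(2) by (simp add: matrix_mul_assoc)
    then show ?case
      using integral_mat_mult[OF descent_move_integral[OF g] h(1)] V by blast
  qed
qed

section \<open>Euclidean motions\<close>

definition rotation :: "real \<Rightarrow> real \<Rightarrow> real^2 \<Rightarrow> real^2" where
  "rotation a b p = vector [a * p$1 - b * p$2, b * p$1 + a * p$2]"

definition motion :: "real \<Rightarrow> real \<Rightarrow> real^2 \<Rightarrow> real^2 \<Rightarrow> real^2" where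
  "motion a b t p = rotation a b p + t"

lemma rotation_nth [simp]:
  "rotation a b p $ 1 = a * p$1 - b * p$2" "rotation a b p $ 2 = b * p$1 + a * p$2"
  by (simp_all add: rotation_def)

lemma rotation_add: "rotation a b (p + q) = rotation a b p + rotation a b q"
  and rotation_diff: "rotation a b (p - q) = rotation a b p - rotation a b q"
  and rotation_minus: "rotation a b (- p) = - rotation a b p"
  by (simp_all add: vec_eq_iff forall_2 algebra_simps)

lemma inner_rotation_transpose: "inner p (rotation a (-b) q) = inner (rotation a b p) q"
  by (simp add: inner_vec2 algebra_simps)

lemma rotation_inverse: "a^2 + b^2 = 1 \<Longrightarrow> rotation a (-b) (rotation a b p) = p"
proof -
  assume ab: "a^2 + b^2 = 1"
  have "rotation a (-b) (rotation a b p) = (a^2 + b^2) *\<^sub>R p"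
    by (simp add: vec_eq_iff forall_2 power2_eq_square algebra_simps)
  then show ?thesis using ab by simp
qed

lemma norm_rotation: "a^2 + b^2 = 1 \<Longrightarrow> norm (rotation a b p) = norm p"
proof -
  assume ab: "a^2 + b^2 = 1"
  have "(norm (rotation a b p))^2 = (a^2 + b^2) * (norm p)^2"
    by (simp add: norm_power2_vec2) (simp add: power2_eq_square algebra_simps)
  then show ?thesis using ab by (simp add: power2_eq_iff_nonneg)
qed

lemma dist_motion: "a^2 + b^2 = 1 \<Longrightarrow> dist (motion a b t p) (motion a b t q) = dist p q"
  by (simp add: dist_norm motion_def flip: rotation_diff) (simp add: norm_rotation)

lemma euclidean_motion_motion: "a^2 + b^2 = 1 \<Longrightarrow> euclidean_motion (motion a b t)"
  by (simp add: euclidean_motion_def dist_motion)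

lemma motion_inverse:
  assumes "a^2 + b^2 = 1"
  shows "motion a (-b) (- rotation a (-b) t) (motion a b t p) = p"
    and "motion a b t (motion a (-b) (- rotation a (-b) t) p) = p"
proof -
  show "motion a (-b) (- rotation a (-b) t) (motion a b t p) = p"
    using assms by (simp add: motion_def rotation_add rotation_inverse)
  have "rotation a b (rotation a (-b) q) = q" for q
    using rotation_inverse[of a "-b" q] assms by simp
  then show "motion a b t (motion a (-b) (- rotation a (-b) t) p) = p"
    by (simp add: motion_def flip: rotation_diff)
qed

lemma image_motion:
  assumes "a^2 + b^2 = 1"
  shows "motion a b t ` S = {q. motion a (-b) (- rotation a (-b) t) q \<in> S}"
  using motion_inverse[OF assms]
  by (auto intro: image_eqI[of _ _ "motion a (-b) (- rotation a (-b) t) _"])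

lemma dist_motion_inverse:
  "a^2 + b^2 = 1 \<Longrightarrow> dist c (motion a (-b) (- rotation a (-b) t) q) = dist (motion a b t c) q"
  by (metis dist_motion motion_inverse(2))

lemma inner_motion_inverse:
  "a^2 + b^2 = 1 \<Longrightarrow>
     inner n (motion a (-b) (- rotation a (-b) t) q)
       = inner (rotation a b n) q - inner (rotation a b n) t"
  by (simp add: motion_def inner_diff_right inner_rotation_transpose)

fun motion_ocircle :: "real \<Rightarrow> real \<Rightarrow> real^2 \<Rightarrow> ocircle \<Rightarrow> ocircle" where
  "motion_ocircle a b t (ODisk c r) = ODisk (motion a b t c) r"
| "motion_ocircle a b t (OCoDisk c r) = OCoDisk (motion a b t c) r"
| "motion_ocircle a b t (OHalf n d) = OHalf (rotation a b n) (d + inner (rotation a b n) t)"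

lemma circ_set_motion_ocircle:
  "a^2 + b^2 = 1 \<Longrightarrow> circ_set (motion_ocircle a b t C) = motion a b t ` circ_set C"
  by (cases C) (auto simp: image_motion dist_motion_inverse inner_motion_inverse)

lemma ointerior_motion_ocircle:
  "a^2 + b^2 = 1 \<Longrightarrow> ointerior (motion_ocircle a b t C) = motion a b t ` ointerior C"
  by (cases C) (auto simp: image_motion dist_motion_inverse inner_motion_inverse)

lemma ocircle_wf_motion_ocircle:
  "a^2 + b^2 = 1 \<Longrightarrow> ocircle_wf (motion_ocircle a b t C) = ocircle_wf C"
  by (cases C) (auto simp: norm_rotation)

lemma is_line_motion_ocircle: "is_line (motion_ocircle a b t C) = is_line C"
  by (cases C) auto

lemma oflip_motion_ocircle: "oflip (motion_ocircle a b t C) = motion_ocircle a b t (oflip C)"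
  by (cases C) (auto simp: rotation_minus)

lemma inj_motion: "a^2 + b^2 = 1 \<Longrightarrow> inj (motion a b t)"
  by (metis injI motion_inverse(1))

lemma ex1_mem_image_iff: "inj f \<Longrightarrow> (\<exists>!q. q \<in> f ` S) \<longleftrightarrow> (\<exists>!p. p \<in> S)"
  by (smt (verit, ccfv_SIG) bij_betw_iff_bijections bij_betw_imageI injD inj_on_def)

lemma tangent_motion_ocircle:
  assumes "a^2 + b^2 = 1"
  shows "tangent (motion_ocircle a b t C1) (motion_ocircle a b t C2) = tangent C1 C2"
proof -
  have "circ_set (motion_ocircle a b t C1) \<inter> circ_set (motion_ocircle a b t C2)
          = motion a b t ` (circ_set C1 \<inter> circ_set C2)"
    using circ_set_motion_ocircle[OF assms] image_Int[OF inj_motion[OF assms]] by simp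
  then show ?thesis
    unfolding tangent_def is_line_motion_ocircle
    by (simp add: ex1_mem_image_iff[OF inj_motion[OF assms]])
qed

lemma disjoint_motion_ocircle:
  assumes "a^2 + b^2 = 1"
  shows "ointerior (motion_ocircle a b t C1) \<inter> ointerior (motion_ocircle a b t C2) = {}
           \<longleftrightarrow> ointerior C1 \<inter> ointerior C2 = {}"
proof -
  have "ointerior (motion_ocircle a b t C1) \<inter> ointerior (motion_ocircle a b t C2)
          = motion a b t ` (ointerior C1 \<inter> ointerior C2)"
    using ointerior_motion_ocircle[OF assms] image_Int[OF inj_motion[OF assms]] by simp
  then show ?thesis by simp
qed

definition motion_config :: "real \<Rightarrow> real \<Rightarrow> real^2 \<Rightarrow> ocircle^4 \<Rightarrow> ocircle^4" where
  "motion_config a b t D = (\<chi> i. motion_ocircle a b t (D$i))"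

lemma oriented_descartes_motion_config:
  assumes "a^2 + b^2 = 1"
  shows "oriented_descartes (motion_config a b t D) = oriented_descartes D"
  by (simp add: oriented_descartes_def motion_config_def ocircle_wf_motion_ocircle[OF assms]
      tangent_motion_ocircle[OF assms] oflip_motion_ocircle disjoint_motion_ocircle[OF assms])

lemma motion_config_inverse:
  assumes "a^2 + b^2 = 1"
  shows "motion_config a (-b) (- rotation a (-b) t) (motion_config a b t D) = D"
    and "motion_config a b t (motion_config a (-b) (- rotation a (-b) t) D) = D"
proof -
  have rot: "rotation a b (rotation a (-b) q) = q" for q
    using rotation_inverse[of a "-b" q] assms by simp
  have "motion_ocircle a (-b) (- rotation a (-b) t) (motion_ocircle a b t C) = C" for C
    using assms motion_inverse(1)[OF assms]
    by (cases C) (simp_all add: rotation_inverse inner_minus_right inner_rotation_transpose)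
  moreover have "motion_ocircle a b t (motion_ocircle a (-b) (- rotation a (-b) t) C) = C" for C
    using assms motion_inverse(2)[OF assms]
    by (cases C) (simp_all add: rot inner_minus_right flip: inner_rotation_transpose)
  ultimately show "motion_config a (-b) (- rotation a (-b) t) (motion_config a b t D) = D"
    and "motion_config a b t (motion_config a (-b) (- rotation a (-b) t) D) = D"
    by (simp_all add: motion_config_def vec_eq_iff)
qed

definition motion_mat :: "real \<Rightarrow> real \<Rightarrow> real^2 \<Rightarrow> real^4^4" where
  "motion_mat a b t = vector [
     vector [1, (norm t)^2, 2 * (a * t$1 + b * t$2), 2 * (a * t$2 - b * t$1)],
     vector [0, 1, 0, 0],
     vector [0, t$1, a, -b],
     vector [0, t$2, b, a]]"

lemma norm_power2_motion:
  assumes "a^2 + b^2 = 1"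
  shows "(norm (motion a b t c))^2
           = (norm c)^2 + 2 * (c$1 * (a * t$1 + b * t$2) + c$2 * (a * t$2 - b * t$1)) + (norm t)^2"
proof -
  have "(norm (motion a b t c))^2
          = (a^2 + b^2) * (c$1^2 + c$2^2)
            + 2 * (c$1 * (a * t$1 + b * t$2) + c$2 * (a * t$2 - b * t$1)) + (t$1^2 + t$2^2)"
    by (simp add: norm_power2_vec2 motion_def) (simp add: power2_eq_square algebra_simps)
  then show ?thesis using assms by (simp add: norm_power2_vec2)
qed

lemma aug_row_motion_ocircle:
  assumes ab: "a^2 + b^2 = 1" and wf: "ocircle_wf C"
  shows "aug_row (motion_ocircle a b t C) = motion_mat a b t *v aug_row C"
proof (cases C)
  case (OHalf n d)
  then show ?thesis
    by (simp add: vec_eq_iff forall_4 matrix_vector_mult_def sum_4 motion_mat_def inner_vec2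
        algebra_simps)
qed (use ab wf in \<open>simp_all add: vec_eq_iff forall_4 matrix_vector_mult_def sum_4 motion_mat_def
       norm_power2_motion, simp_all add: motion_def field_simps power2_eq_square\<close>)

lemma row_matrix_mul_transpose:
  "((A :: 'a::comm_semiring_1^'n^'m) ** transpose B) $ i = B *v (A $ i)"
  by (simp add: vec_eq_iff matrix_matrix_mult_def matrix_vector_mult_def transpose_def mult.commute)

lemma W_coord_motion_config:
  assumes "a^2 + b^2 = 1" and "oriented_descartes X"
  shows "W_coord (motion_config a b t X) = W_coord X ** transpose (motion_mat a b t)"
  using assms aug_row_motion_ocircle
  by (simp add: vec_eq_iff W_coord_def motion_config_def row_matrix_mul_transpose
      oriented_descartes_def)

lemma motion_config_in_sA_orbit:
  assumes ab: "a^2 + b^2 = 1" and D: "oriented_descartes D" and X: "X \<in> sA_orbit D"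
  shows "motion_config a b t X \<in> sA_orbit (motion_config a b t D)"
proof -
  obtain g where g: "g \<in> superApollonian" "W_coord X = g ** W_coord D"
    and "oriented_descartes X"
    using X unfolding sA_orbit_def by blast
  then have "W_coord (motion_config a b t X) = g ** W_coord (motion_config a b t D)"
    using W_coord_motion_config[OF ab] D by (simp add: matrix_mul_assoc)
  then show ?thesis
    using g(1) \<open>oriented_descartes X\<close> oriented_descartes_motion_config[OF ab]
    unfolding sA_orbit_def by blast
qed

lemma sA_orbit_motion_config:
  assumes ab: "a^2 + b^2 = 1" and D: "oriented_descartes D"
  shows "sA_orbit (motion_config a b t D) = motion_config a b t ` sA_orbit D"
proof
  show "motion_config a b t ` sA_orbit D \<subseteq> sA_orbit (motion_config a b t D)"
    using motion_config_in_sA_orbit[OF ab D] by blast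
  show "sA_orbit (motion_config a b t D) \<subseteq> motion_config a b t ` sA_orbit D"
  proof
    fix Y assume Y: "Y \<in> sA_orbit (motion_config a b t D)"
    let ?inv = "motion_config a (-b) (- rotation a (-b) t)"
    have ab': "a^2 + (-b)^2 = 1" using ab by simp
    have "?inv Y \<in> sA_orbit (?inv (motion_config a b t D))"
      using motion_config_in_sA_orbit[OF ab' _ Y] D oriented_descartes_motion_config[OF ab] by blast
    then have "?inv Y \<in> sA_orbit D"
      using motion_config_inverse(1)[OF ab] by simp
    moreover have "Y = motion_config a b t (?inv Y)"
      using motion_config_inverse(2)[OF ab] by simp
    ultimately show "Y \<in> motion_config a b t ` sA_orbit D" by blast
  qed
qed

lemma super_packing_motion_config:
  assumes "a^2 + b^2 = 1" and "oriented_descartes D"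
  shows "(\<lambda>C. motion a b t ` C) ` super_packing D = super_packing (motion_config a b t D)"
proof -
  have "super_packing (motion_config a b t D)
          = {circ_set (motion_config a b t X $ i) | X i. X \<in> sA_orbit D}"
    unfolding super_packing_def sA_orbit_motion_config[OF assms] by blast
  also have "\<dots> = {motion a b t ` circ_set (X $ i) | X i. X \<in> sA_orbit D}"
    by (simp add: motion_config_def circ_set_motion_ocircle[OF assms(1)])
  also have "\<dots> = (\<lambda>C. motion a b t ` C) ` super_packing D"
    unfolding super_packing_def by blast
  finally show ?thesis ..
qed

section \<open>An integral frame for reduced matrices\<close>

lemma motion_mat_mult_nth:
  "(motion_mat a b t *v x) $ 2 = x$2"
  "(motion_mat a b t *v x) $ 3 = t$1 * x$2 + a * x$3 - b * x$4"
  "(motion_mat a b t *v x) $ 4 = t$2 * x$2 + b * x$3 + a * x$4"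
  by (simp_all add: matrix_vector_mult_def sum_4 motion_mat_def)

lemma line_row_after_rotation:
  fixes x y :: "real^4"
  assumes x: "x$2 = 0" "inversive_prod x x = 1" and y: "y$2 = 0" "inversive_prod y y = 1"
    and xy: "(inversive_prod y x)^2 = 1"
  shows "(motion_mat (y$4) (y$3) t *v x) $ 3 = 0"
    and "(motion_mat (y$4) (y$3) t *v x) $ 4 = inversive_prod y x"
proof -
  let ?z3 = "y$4 * x$3 - y$3 * x$4" and ?z4 = "y$3 * x$3 + y$4 * x$4"
  have "?z3^2 + ?z4^2 = (y$3^2 + y$4^2) * (x$3^2 + x$4^2)"
    by (simp add: power2_eq_square algebra_simps)
  also have "\<dots> = 1"
    using x y by (simp add: inversive_prod_def power2_eq_square)
  finally have "?z3 = 0"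
    using xy x y by (simp add: inversive_prod_def)
  then show "(motion_mat (y$4) (y$3) t *v x) $ 3 = 0"
    and "(motion_mat (y$4) (y$3) t *v x) $ 4 = inversive_prod y x"
    using x y by (simp_all add: motion_mat_mult_nth inversive_prod_def)
qed

lemma circle_row_after_motion:
  fixes x y z :: "real^4"
  assumes m: "m \<noteq> 0" and x: "x$2 = m" "inversive_prod x x = 1"
    and z: "z$2 = m" "inversive_prod z z = 1" and y: "y$2 = 0" "inversive_prod y y = 1"
    and yx: "inversive_prod y x = inversive_prod y z"
  defines "t \<equiv> vector [- (y$4 * z$3 - y$3 * z$4) / m, - (y$3 * z$3 + y$4 * z$4) / m] :: real^2"
  shows "(motion_mat (y$4) (y$3) t *v x) $ 4 = 0"
    and "((motion_mat (y$4) (y$3) t *v x) $ 3)^2 = 2 - 2 * inversive_prod x z"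
proof -
  define v3 v4 where "v3 = x$3 - z$3" and "v4 = x$4 - z$4"
  have e3: "(motion_mat (y$4) (y$3) t *v x) $ 3 = y$4 * v3 - y$3 * v4"
    and e4: "(motion_mat (y$4) (y$3) t *v x) $ 4 = y$3 * v3 + y$4 * v4"
    using m x by (simp_all add: motion_mat_mult_nth t_def v3_def v4_def field_simps)
  have "y$3 * v3 + y$4 * v4 = inversive_prod y x - inversive_prod y z"
    using x z y by (simp add: inversive_prod_def v3_def v4_def algebra_simps)
  then show "(motion_mat (y$4) (y$3) t *v x) $ 4 = 0"
    using e4 yx by simp
  have "(y$4 * v3 - y$3 * v4)^2 + (y$3 * v3 + y$4 * v4)^2 = (y$3^2 + y$4^2) * (v3^2 + v4^2)"
    by (simp add: power2_eq_square algebra_simps)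
  also have "\<dots> = inversive_prod x x + inversive_prod z z - 2 * inversive_prod x z"
    using x z y by (simp add: inversive_prod_def v3_def v4_def power2_eq_square algebra_simps)
  finally show "((motion_mat (y$4) (y$3) t *v x) $ 3)^2 = 2 - 2 * inversive_prod x z"
    using e3 e4 \<open>(motion_mat (y$4) (y$3) t *v x) $ 4 = 0\<close> x z by simp
qed

lemma Ints_if_power2_0_or_4:
  fixes z :: real
  assumes "z^2 = 0 \<or> z^2 = 4"
  shows "z \<in> \<int>"
proof -
  have "z = 0 \<or> z = 2 \<or> z = -2"
    using assms power2_eq_iff[of z 2] by auto
  then show ?thesis by auto
qed

lemma reduced_gram_integral_frame:
  assumes gram: "descartes_gram V" and red: "reduced_curvatures V" and ints: "\<forall>i. V$i$2 \<in> \<int>"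
  shows "\<exists>a b t. a^2 + b^2 = 1 \<and>
           (\<forall>i j. j \<noteq> 1 \<longrightarrow> (V ** transpose (motion_mat a b t)) $ i $ j \<in> \<int>)"
proof -
  obtain m i0 j0 where m: "m \<noteq> 0" and vals: "\<forall>i. V$i$2 = 0 \<or> V$i$2 = m"
    and i0: "V$i0$2 = 0" and j0: "V$j0$2 = m"
    using red unfolding reduced_curvatures_def by blast
  have B: "inversive_prod (V$i) (V$j) = (if i = j then 1 else -1)" for i j
    using gram by (simp add: descartes_gram_def)
  let ?y = "V$i0" and ?z = "V$j0"
  \<comment> \<open>Rotating by (?y$4, ?y$3) turns the normal of line i0 into (0, 1), and t then moves the
    centre of circle j0 to the origin.\<close>
  define t :: "real^2"
    where "t = vector [- (?y$4 * ?z$3 - ?y$3 * ?z$4) / m, - (?y$3 * ?z$3 + ?y$4 * ?z$4) / m]"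
  have "(?y$4)^2 + (?y$3)^2 = 1"
    using B[of i0 i0] i0 by (simp add: inversive_prod_def power2_eq_square)
  moreover have "(motion_mat (?y$4) (?y$3) t *v V$k) $ j \<in> \<int>" if "j \<noteq> 1" for k j
  proof (cases "V$k$2 = 0")
    case True
    then have "(motion_mat (?y$4) (?y$3) t *v V$k) $ 3 = 0"
      and "(motion_mat (?y$4) (?y$3) t *v V$k) $ 4 = inversive_prod ?y (V$k)"
      using line_row_after_rotation[of "V$k" ?y] B i0 by auto
    then show ?thesis
      using that True B[of i0 k] exhaust_4[of j] by (auto simp: motion_mat_mult_nth)
  next
    case False
    then have "V$k$2 = m" using vals by blast
    moreover have "k \<noteq> i0" "j0 \<noteq> i0" using i0 j0 m \<open>V$k$2 = m\<close> by auto
    ultimately have row4: "(motion_mat (?y$4) (?y$3) t *v V$k) $ 4 = 0"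
      and row3: "((motion_mat (?y$4) (?y$3) t *v V$k) $ 3)^2 = 2 - 2 * inversive_prod (V$k) ?z"
      using circle_row_after_motion[of m "V$k" ?z ?y] m j0 i0 B unfolding t_def by auto
    moreover have "(motion_mat (?y$4) (?y$3) t *v V$k) $ 3 \<in> \<int>"
      using Ints_if_power2_0_or_4 row3 B[of k j0] by (auto split: if_splits)
    ultimately show ?thesis
      using that ints row4 exhaust_4[of j] by (auto simp: motion_mat_mult_nth)
  qed
  ultimately show ?thesis
    unfolding row_matrix_mul_transpose by blast
qed

lemma M_coord_integral:
  assumes W: "W_coord X = h ** U" and h: "integral_mat h"
    and U: "\<forall>i j. j \<noteq> 1 \<longrightarrow> U $ i $ j \<in> \<int>"
  shows "M_coord X $ i $ j \<in> \<int>"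
proof -
  have "W_coord X $ i $ l \<in> \<int>" if "l \<noteq> 1" for l
    unfolding W using U that by (intro integral_mat_mult_column[OF h]) simp
  moreover have "M_coord X $ i $ 1 = W_coord X $ i $ 2" "M_coord X $ i $ 2 = W_coord X $ i $ 3"
    "M_coord X $ i $ 3 = W_coord X $ i $ 4"
    by (simp_all add: M_coord_def W_coord_def)
  ultimately show ?thesis using exhaust_3[of j] by auto
qed

theorem theorem4p3:
  assumes "oriented_descartes D"
    and "integral_super_packing D"
  shows "\<exists>f D'. euclidean_motion f \<and> oriented_descartes D' \<and>
           strongly_integral_super_packing D' \<and>
           (\<lambda>C. f ` C) ` super_packing D = super_packing D'"
proof -
  obtain E where E: "E \<in> sA_orbit D" and curv: "\<forall>i. curv (E$i) \<in> \<int>"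
    using assms(2) unfolding integral_super_packing_def by blast
  then have gram: "descartes_gram (W_coord E)"
    using oriented_descartes_gram unfolding sA_orbit_def by blast
  obtain h V where h: "integral_mat h" "W_coord E = h ** V"
    and V: "descartes_gram V" "reduced_curvatures V" "\<forall>i. V$i$2 \<in> \<int>"
    using descent_to_reduced[OF gram] curv by (auto simp: W_coord_curv)
  obtain a b t where ab: "a^2 + b^2 = 1"
    and frame: "\<forall>i j. j \<noteq> 1 \<longrightarrow> (V ** transpose (motion_mat a b t)) $ i $ j \<in> \<int>"
    using reduced_gram_integral_frame[OF V] by blast
  have W: "W_coord (motion_config a b t E) = h ** (V ** transpose (motion_mat a b t))"
    using W_coord_motion_config[OF ab] E h(2) by (simp add: sA_orbit_def matrix_mul_assoc)
  have "M_coord (motion_config a b t E) $ i $ j \<in> \<int>" for i j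
    using M_coord_integral[OF W h(1) frame] .
  moreover have "motion_config a b t E \<in> sA_orbit (motion_config a b t D)"
    using motion_config_in_sA_orbit[OF ab assms(1) E] .
  ultimately show ?thesis
    using euclidean_motion_motion[OF ab] oriented_descartes_motion_config[OF ab] assms(1)
      super_packing_motion_config[OF ab assms(1)]
    unfolding strongly_integral_super_packing_def by blast
qed

end
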